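(* Suppose that $\theta<\kappa$ is a pair of infinite regular cardinals and $\boxminus^-(\kappa,\theta)$ holds. Then there exists an $E^\kappa_{\ge\theta}$-closed subadditive coloring $c:[\kappa]^2\to\theta$ witnessing $\mathrm U(\kappa,2,\theta,2)$. In particular, $\kappa$ is not weakly compact.
   Context: $E^\kappa_{\ge\theta}$ is the set of ordinals below $\kappa$ of cofinality $\ge\theta$; $\mathrm{acc}(A)=\{\alpha\in A\mid\sup(A\cap\alpha)=\alpha>0\}$. $\boxminus^-(\kappa,\theta)$ asserts the existence of $\langle C_{\alpha,i}\mid\alpha\in\mathrm{acc}(\kappa),\ i(\alpha)\le i<\theta\rangle$ such that: (1) for all $\alpha$, $i(\alpha)<\theta$ and $\langle C_{\alpha,i}\mid i(\alpha)\le i<\theta\rangle$ is a $\subseteq$-increasing sequence of clubs in $\alpha$ with $\mathrm{acc}(\alpha)=\bigcup_i\mathrm{acc}(C_{\alpha,i})$; (2) for all $\alpha$, $i(\alpha)\le i<\theta$ and $\bar\alpha\in\mathrm{acc}(C_{\alpha,i})\cap E^\kappa_{\ge\theta}$: $i(\bar\alpha)\le i$ and $C_{\bar\alpha,i}=C_{\alpha,i}\cap\bar\alpha$; (3) for all $\bar\alpha<\alpha$ in $\mathrm{acc}(\kappa)$ and all sufficiently large $i<\theta$, $C_{\bar\alpha,i}=C_{\alpha,i}\cap\bar\alpha$; (4) for every club $D\subseteq\kappa$ there is $\alpha\in\mathrm{acc}(D)\cap E^\kappa_{\ge\theta}$ with $D\cap\alpha\ne C_{\alpha,i}$ for all $i<\theta$.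 A coloring $c:[\kappa]^2\to\theta$ witnesses $\mathrm U(\kappa,2,\theta,2)$ if for every $H\in[\kappa]^\kappa$, $c``[H]^2$ is cofinal in $\theta$. It is subadditive if for all $\alpha<\beta<\gamma<\kappa$, $c(\alpha,\gamma)\le\max\{c(\alpha,\beta),c(\beta,\gamma)\}$ and $c(\alpha,\beta)\le\max\{c(\alpha,\gamma),c(\beta,\gamma)\}$. It is $\Sigma$-closed (for $\Sigma\subseteq\kappa$) if whenever $\alpha<\beta<\kappa$, $j<\theta$, $\alpha\in\Sigma$ and $\sup\{\varepsilon<\alpha\mid c(\varepsilon,\beta)\le j\}=\alpha$, then $c(\alpha,\beta)\le j$. *)

theory Defs
  imports Main
begin

text \<open>The cardinal kappa is represented by a type 'k of class wellorder
whose order type is kappa (every proper initial segment has cardinality smaller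
than the whole type). Ordinals below kappa are the elements of 'k; in particular
theta < kappa is an element of 'k and the ordinal theta is the set of its
predecessors.\<close>

definition is_cardinal_ord :: "'a::wellorder \<Rightarrow> bool" where
  "is_cardinal_ord \<theta> \<longleftrightarrow> (\<forall>j<\<theta>. (card_of ({..<j}), card_of ({..<\<theta>}) ) \<in> ordLess)"

definition cofinal_in :: "'a::wellorder set \<Rightarrow> 'a \<Rightarrow> bool" where
  "cofinal_in X \<alpha> \<longleftrightarrow> X \<subseteq> {..<\<alpha>} \<and> (\<forall>\<beta><\<alpha>. \<exists>x\<in>X. \<beta> \<le> x)"

definition cf_ge :: "'a::wellorder \<Rightarrow> 'a \<Rightarrow> bool" where
  "cf_ge \<alpha> \<theta> \<longleftrightarrow> (\<forall>X. cofinal_in X \<alpha> \<longrightarrow> (card_of ({..<\<theta>}), card_of (X) ) \<in> ordLeq)"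

definition infinite_regular_cardinal_ord :: "'a::wellorder \<Rightarrow> bool" where
  "infinite_regular_cardinal_ord \<theta> \<longleftrightarrow>
     infinite {..<\<theta>} \<and> is_cardinal_ord \<theta> \<and> cf_ge \<theta> \<theta>"

definition E_ge :: "'a::wellorder \<Rightarrow> 'a set" where
  "E_ge \<theta> = {\<alpha>. cf_ge \<alpha> \<theta>}"

text \<open>alpha is an accumulation point of A: sup(A \<inter> alpha) = alpha > 0\<close>
definition acc_pt :: "'a::wellorder set \<Rightarrow> 'a \<Rightarrow> bool" where
  "acc_pt A \<alpha> \<longleftrightarrow> (\<exists>\<beta>. \<beta> < \<alpha>) \<and> (\<forall>\<beta><\<alpha>. \<exists>\<gamma>\<in>A. \<beta> < \<gamma> \<and> \<gamma> < \<alpha>)"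

definition acc :: "'a::wellorder set \<Rightarrow> 'a set" where
  "acc A = {\<alpha>\<in>A. acc_pt A \<alpha>}"

definition club_in :: "'a::wellorder set \<Rightarrow> 'a \<Rightarrow> bool" where
  "club_in C \<alpha> \<longleftrightarrow> C \<subseteq> {..<\<alpha>} \<and> (\<forall>\<beta><\<alpha>. \<exists>\<gamma>\<in>C. \<beta> \<le> \<gamma>)
      \<and> (\<forall>\<beta><\<alpha>. acc_pt C \<beta> \<longrightarrow> \<beta> \<in> C)"

definition club :: "'a::wellorder set \<Rightarrow> bool" where
  "club D \<longleftrightarrow> (\<forall>\<beta>. \<exists>\<gamma>\<in>D. \<beta> \<le> \<gamma>) \<and> (\<forall>\<beta>. acc_pt D \<beta> \<longrightarrow> \<beta> \<in> D)"

definition kappa_infinite_regular_cardinal :: "'a::wellorder itself \<Rightarrow> bool" where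
  "kappa_infinite_regular_cardinal TYPE('a) \<longleftrightarrow>
     infinite (UNIV :: 'a set) \<and> (\<forall>\<alpha>::'a. (card_of ({..<\<alpha>}), card_of (UNIV :: 'a set) ) \<in> ordLess)
     \<and> (\<forall>X::'a set. (\<forall>\<beta>. \<exists>x\<in>X. \<beta> \<le> x) \<longrightarrow> (card_of (UNIV :: 'a set), card_of (X) ) \<in> ordLeq)"

text \<open>The principle boxminus^-(kappa, theta), with C alpha i = C_{alpha,i} and
ix alpha = i(alpha). Values of C and ix outside the index domain are irrelevant.\<close>
definition boxminus_minus_wit :: "'a::wellorder \<Rightarrow> ('a \<Rightarrow> 'a \<Rightarrow> 'a set) \<Rightarrow> ('a \<Rightarrow> 'a) \<Rightarrow> bool" where
  "boxminus_minus_wit \<theta> C ix \<longleftrightarrow>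
    (\<forall>\<alpha>\<in>acc UNIV.
        ix \<alpha> < \<theta>
      \<and> (\<forall>i. ix \<alpha> \<le> i \<and> i < \<theta> \<longrightarrow> club_in (C \<alpha> i) \<alpha>)
      \<and> (\<forall>i j. ix \<alpha> \<le> i \<and> i \<le> j \<and> j < \<theta> \<longrightarrow> C \<alpha> i \<subseteq> C \<alpha> j)
      \<and> acc {..<\<alpha>} = (\<Union>i\<in>{i. ix \<alpha> \<le> i \<and> i < \<theta>}. acc (C \<alpha> i)))
  \<and> (\<forall>\<alpha>\<in>acc UNIV. \<forall>i. ix \<alpha> \<le> i \<and> i < \<theta> \<longrightarrow>
        (\<forall>\<alpha>'\<in>acc (C \<alpha> i) \<inter> E_ge \<theta>. ix \<alpha>' \<le> i \<and> C \<alpha>' i = C \<alpha> i \<inter> {..<\<alpha>'}))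
  \<and> (\<forall>\<alpha>'\<in>acc UNIV. \<forall>\<alpha>\<in>acc UNIV. \<alpha>' < \<alpha> \<longrightarrow>
        (\<exists>j<\<theta>. \<forall>i. j \<le> i \<and> i < \<theta> \<and> ix \<alpha>' \<le> i \<and> ix \<alpha> \<le> i \<longrightarrow> C \<alpha>' i = C \<alpha> i \<inter> {..<\<alpha>'}))
  \<and> (\<forall>D. club D \<longrightarrow>
        (\<exists>\<alpha>\<in>acc D \<inter> E_ge \<theta>. \<forall>i. ix \<alpha> \<le> i \<and> i < \<theta> \<longrightarrow> D \<inter> {..<\<alpha>} \<noteq> C \<alpha> i))"

definition boxminus_minus :: "'a::wellorder itself \<Rightarrow> 'a \<Rightarrow> bool" where
  "boxminus_minus TYPE('a) \<theta> \<longleftrightarrow> (\<exists>C ix. boxminus_minus_wit (\<theta>::'a) C ix)"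

text \<open>c : [kappa]^2 -> theta, represented on pairs alpha < beta\<close>
definition coloring_into :: "('a::wellorder \<Rightarrow> 'a \<Rightarrow> 'a) \<Rightarrow> 'a \<Rightarrow> bool" where
  "coloring_into c \<theta> \<longleftrightarrow> (\<forall>\<alpha> \<beta>. \<alpha> < \<beta> \<longrightarrow> c \<alpha> \<beta> < \<theta>)"

definition witnesses_U :: "('a::wellorder \<Rightarrow> 'a \<Rightarrow> 'a) \<Rightarrow> 'a \<Rightarrow> bool" where
  "witnesses_U c \<theta> \<longleftrightarrow> coloring_into c \<theta> \<and>
     (\<forall>H::'a set. (card_of (H), card_of (UNIV :: 'a set) ) \<in> ordIso \<longrightarrow>
        (\<forall>j<\<theta>. \<exists>\<alpha>\<in>H. \<exists>\<beta>\<in>H. \<alpha> < \<beta> \<and> j \<le> c \<alpha> \<beta>))"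

definition subadditive :: "('a::wellorder \<Rightarrow> 'a \<Rightarrow> 'a) \<Rightarrow> bool" where
  "subadditive c \<longleftrightarrow> (\<forall>\<alpha> \<beta> \<gamma>. \<alpha> < \<beta> \<and> \<beta> < \<gamma> \<longrightarrow>
      c \<alpha> \<gamma> \<le> max (c \<alpha> \<beta>) (c \<beta> \<gamma>) \<and> c \<alpha> \<beta> \<le> max (c \<alpha> \<gamma>) (c \<beta> \<gamma>))"

text \<open>Sigma-closed. For alpha in Sigma (here always a nonzero limit), the condition
sup{eps < alpha | c eps beta <= j} = alpha is written as unboundedness in alpha.\<close>
definition Sigma_closed :: "'a::wellorder set \<Rightarrow> ('a \<Rightarrow> 'a \<Rightarrow> 'a) \<Rightarrow> 'a \<Rightarrow> bool" where
  "Sigma_closed \<Sigma> c \<theta> \<longleftrightarrow> (\<forall>\<alpha> \<beta> j. \<alpha> < \<beta> \<and> j < \<theta> \<and> \<alpha> \<in> \<Sigma> \<and>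
      (\<exists>\<delta>. \<delta> < \<alpha>) \<and> (\<forall>\<delta><\<alpha>. \<exists>\<epsilon><\<alpha>. \<delta> < \<epsilon> \<and> c \<epsilon> \<beta> \<le> j) \<longrightarrow> c \<alpha> \<beta> \<le> j)"

definition weakly_compact :: "'a::wellorder itself \<Rightarrow> bool" where
  "weakly_compact TYPE('a) \<longleftrightarrow> (natLeq, card_of (UNIV :: 'a set) ) \<in> ordLess \<and>
     (\<forall>f :: 'a \<Rightarrow> 'a \<Rightarrow> bool. \<exists>H::'a set. (card_of (H), card_of (UNIV :: 'a set) ) \<in> ordIso \<and>
        (\<exists>b. \<forall>\<alpha>\<in>H. \<forall>\<beta>\<in>H. \<alpha> < \<beta> \<longrightarrow> f \<alpha> \<beta> = b))"

end

theory Submission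
  imports Defs "HOL-Library.FuncSet"
begin

(* Send every ordinal to the next limit and let c(alpha, beta) be the least i from which on the
clubs at the two limits cohere, C_{alpha,k} = C_{beta,k} \<inter> alpha for all k >= i.  Coherence is
transitive, which gives subadditivity, and clause (2) gives closure at points of cofinality
>= theta.  If c were bounded by j on a set H of size kappa, the clubs at level j of the limits
next to H would cohere pairwise, and their union would be a club threading the sequence,
against clause (4).

If kappa were weakly compact, the tree of initial segments of the columns c(-, beta) would have
a cofinal branch F.  Its levels are small: a lexicographically homogeneous set of kappa functions
on some alpha would inject, through the places where consecutive members diverge, into the
small set of shorter restrictions.  Homogeneity for the lexicographic order then singles out one
node per level that is extended unboundedly often.  F is constant, say j, on an unbounded set,
and subadditivity bounds c by j on that set, against U(kappa, 2, theta, 2). *)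

unbundle cardinal_syntax

abbreviation unbounded :: "'a::wellorder set \<Rightarrow> bool" where
  "unbounded X \<equiv> \<forall>\<beta>. \<exists>x\<in>X. \<beta> \<le> x"

lemma bounded_iff_not_unbounded: "(\<exists>b. X \<subseteq> {..<b}) \<longleftrightarrow> \<not> unbounded X"
  by (auto simp: subset_eq not_le)

lemma cf_ge_imp_limit:
  assumes "cf_ge \<alpha> \<theta>" and "infinite {..<\<theta>}" and "\<beta> < \<alpha>"
  shows "\<exists>\<gamma>. \<beta> < \<gamma> \<and> \<gamma> < \<alpha>"
proof (rule ccontr)
  assume "\<not> ?thesis"
  hence "cofinal_in {\<beta>} \<alpha>"
    using \<open>\<beta> < \<alpha>\<close> unfolding cofinal_in_def by (auto simp: not_less)
  hence "|{..<\<theta>}| \<le>o |{\<beta>}|"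
    using \<open>cf_ge \<alpha> \<theta>\<close> unfolding cf_ge_def by blast
  thus False
    using \<open>infinite {..<\<theta>}\<close> card_of_ordLeq_finite by blast
qed

definition first_diff :: "('a::wellorder \<Rightarrow> 'b) \<Rightarrow> ('a \<Rightarrow> 'b) \<Rightarrow> 'a" where
  "first_diff g h = (LEAST \<xi>. g \<xi> \<noteq> h \<xi>)"

definition lex_less :: "('a::wellorder \<Rightarrow> 'b::linorder) \<Rightarrow> ('a \<Rightarrow> 'b) \<Rightarrow> bool" where
  "lex_less g h \<longleftrightarrow> g \<noteq> h \<and> g (first_diff g h) < h (first_diff g h)"

definition divergence :: "('a::wellorder \<Rightarrow> 'b) \<Rightarrow> ('a \<Rightarrow> 'b) \<Rightarrow> 'a \<times> ('a \<Rightarrow> 'b) \<times> 'b" where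
  "divergence g h = (first_diff g h, restrict h {..<first_diff g h}, h (first_diff g h))"

lemma first_diff:
  assumes "g \<noteq> h"
  shows first_diff_neq: "g (first_diff g h) \<noteq> h (first_diff g h)"
    and "\<eta> < first_diff g h \<Longrightarrow> g \<eta> = h \<eta>"
proof -
  obtain \<xi> where "g \<xi> \<noteq> h \<xi>"
    using assms by blast
  thus "g (first_diff g h) \<noteq> h (first_diff g h)"
    unfolding first_diff_def by (rule LeastI)
  show "\<eta> < first_diff g h \<Longrightarrow> g \<eta> = h \<eta>"
    unfolding first_diff_def using not_less_Least by blast
qed

lemma first_diff_eqI:
  assumes "\<forall>\<eta><\<xi>. g \<eta> = h \<eta>" and "g \<xi> \<noteq> h \<xi>"
  shows "first_diff g h = \<xi>"
  unfolding first_diff_def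
  by (rule Least_equality) (use assms not_le in auto)

lemma lex_less_iff_at_first_diff:
  assumes "\<forall>\<eta><\<xi>. g \<eta> = h \<eta>" and "g \<xi> \<noteq> h \<xi>"
  shows "lex_less g h \<longleftrightarrow> g \<xi> < h \<xi>"
  using assms first_diff_eqI unfolding lex_less_def by auto

text \<open>If \<open>\<beta> < \<gamma>\<close> in a homogeneous set had the same divergence from their successors, then
  \<open>nxt \<beta> \<le> \<gamma> < nxt \<gamma>\<close> would agree below the divergence point \<open>\<delta>\<close>, and the pairs
  \<open>(nxt \<beta>, \<gamma>)\<close> and \<open>(\<gamma>, nxt \<gamma>)\<close> would be ordered in opposite directions at \<open>\<delta>\<close>.\<close>
lemma lex_homogeneous_divergence_inj:
  fixes u :: "'a::wellorder \<Rightarrow> 'a \<Rightarrow> 'b::linorder"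
  assumes inj: "inj u"
    and hom: "\<forall>\<beta>\<in>H. \<forall>\<gamma>\<in>H. \<beta> < \<gamma> \<longrightarrow> lex_less (u \<beta>) (u \<gamma>) = b"
    and nxt: "\<forall>\<beta>\<in>H. nxt \<beta> \<in> H \<and> \<beta> < nxt \<beta> \<and> (\<forall>\<gamma>\<in>H. \<beta> < \<gamma> \<longrightarrow> nxt \<beta> \<le> \<gamma>)"
  shows "inj_on (\<lambda>\<beta>. divergence (u \<beta>) (u (nxt \<beta>))) H"
proof -
  have False if "\<beta> \<in> H" "\<gamma> \<in> H" "\<beta> < \<gamma>"
    and eq: "divergence (u \<beta>) (u (nxt \<beta>)) = divergence (u \<gamma>) (u (nxt \<gamma>))" for \<beta> \<gamma>
  proof -
    define \<delta> where "\<delta> = first_diff (u \<gamma>) (u (nxt \<gamma>))"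
    have "u \<gamma> \<noteq> u (nxt \<gamma>)"
      using inj nxt \<open>\<gamma> \<in> H\<close> by (metis less_irrefl injD)
    hence \<gamma>_agree: "\<forall>\<eta><\<delta>. u \<gamma> \<eta> = u (nxt \<gamma>) \<eta>" and \<gamma>_neq: "u \<gamma> \<delta> \<noteq> u (nxt \<gamma>) \<delta>"
      unfolding \<delta>_def using first_diff by blast+
    have "first_diff (u \<beta>) (u (nxt \<beta>)) = \<delta>"
      and "restrict (u (nxt \<beta>)) {..<\<delta>} = restrict (u (nxt \<gamma>)) {..<\<delta>}"
      and \<beta>\<gamma>_eq: "u (nxt \<beta>) \<delta> = u (nxt \<gamma>) \<delta>"
      using eq unfolding divergence_def \<delta>_def by auto
    hence \<beta>_agree: "\<forall>\<eta><\<delta>. u (nxt \<beta>) \<eta> = u (nxt \<gamma>) \<eta>"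
      by (metis lessThan_iff restrict_apply')
    have "nxt \<beta> \<le> \<gamma>"
      using nxt that(1-3) by blast
    show False
    proof (cases "nxt \<beta> = \<gamma>")
      case True
      thus False
        using \<gamma>_neq \<beta>\<gamma>_eq by simp
    next
      case False
      hence "nxt \<beta> < \<gamma>"
        using \<open>nxt \<beta> \<le> \<gamma>\<close> by simp
      hence "lex_less (u (nxt \<beta>)) (u \<gamma>) = b" and "lex_less (u \<gamma>) (u (nxt \<gamma>)) = b"
        using hom nxt that(1,2) by blast+
      moreover have "lex_less (u (nxt \<beta>)) (u \<gamma>) \<longleftrightarrow> u (nxt \<beta>) \<delta> < u \<gamma> \<delta>"
        by (rule lex_less_iff_at_first_diff) (use \<gamma>_agree \<beta>_agree \<gamma>_neq \<beta>\<gamma>_eq in auto)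
      moreover have "lex_less (u \<gamma>) (u (nxt \<gamma>)) \<longleftrightarrow> u \<gamma> \<delta> < u (nxt \<gamma>) \<delta>"
        by (rule lex_less_iff_at_first_diff) (use \<gamma>_agree \<gamma>_neq in auto)
      ultimately show False
        using \<gamma>_neq \<beta>\<gamma>_eq by (metis less_asym neqE)
    qed
  qed
  thus ?thesis
    unfolding inj_on_def by (metis neqE)
qed

lemma divergence_mem:
  assumes N: "N \<subseteq> {..<\<alpha>} \<rightarrow>\<^sub>E V" and "g \<in> N" "h \<in> N" "g \<noteq> h"
  shows "divergence g h \<in> {..<\<alpha>} \<times> (\<Union>\<delta>\<in>{..<\<alpha>}. (\<lambda>s. restrict s {..<\<delta>}) ` N) \<times> V"
proof -
  define \<delta> where "\<delta> = first_diff g h"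
  have neq: "g \<delta> \<noteq> h \<delta>"
    unfolding \<delta>_def using \<open>g \<noteq> h\<close> by (rule first_diff_neq)
  have gh: "g \<in> {..<\<alpha>} \<rightarrow>\<^sub>E V" "h \<in> {..<\<alpha>} \<rightarrow>\<^sub>E V"
    using N \<open>g \<in> N\<close> \<open>h \<in> N\<close> by auto
  hence "\<delta> < \<alpha>"
    using neq by (metis PiE_arb lessThan_iff)
  moreover have "h \<delta> \<in> V"
    using gh \<open>\<delta> < \<alpha>\<close> by auto
  ultimately show ?thesis
    using \<open>h \<in> N\<close> unfolding divergence_def \<delta>_def[symmetric] by blast
qed

definition tree_level :: "('a::wellorder \<Rightarrow> 'a \<Rightarrow> 'b) \<Rightarrow> 'a \<Rightarrow> ('a \<Rightarrow> 'b) set" where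
  "tree_level t \<delta> = (\<lambda>\<beta>. restrict (t \<beta>) {..<\<delta>}) ` {\<delta>..}"

lemma tree_branch_agrees:
  assumes "restrict F {..<\<delta>} \<in> tree_level t \<delta>" and "\<xi> < \<delta>" and "\<xi>' < \<delta>"
  shows "\<exists>\<beta>\<ge>\<delta>. F \<xi> = t \<beta> \<xi> \<and> F \<xi>' = t \<beta> \<xi>'"
proof -
  obtain \<beta> where "\<delta> \<le> \<beta>" "restrict F {..<\<delta>} = restrict (t \<beta>) {..<\<delta>}"
    using assms(1) unfolding tree_level_def by auto
  thus ?thesis
    using assms(2,3) by (metis lessThan_iff restrict_apply')
qed

section \<open>Small and unbounded subsets of a regular cardinal\<close>

context
  assumes regular: "kappa_infinite_regular_cardinal TYPE('k::wellorder)"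
begin

lemma infinite_kappa: "infinite (UNIV :: 'k set)"
  using regular unfolding kappa_infinite_regular_cardinal_def by blast

lemma unbounded_imp_ordLeq: "unbounded (X :: 'k set) \<Longrightarrow> |UNIV :: 'k set| \<le>o |X|"
  using regular unfolding kappa_infinite_regular_cardinal_def by blast

lemma gt_ex_kappa: "\<exists>b. (a::'k) < b"
proof (rule ccontr)
  assume "\<not> ?thesis"
  hence "|UNIV :: 'k set| \<le>o |{a}|"
    by (intro unbounded_imp_ordLeq) (auto simp: not_less)
  thus False
    using infinite_kappa card_of_ordLeq_finite by blast
qed

lemma small_iff_bounded: "|X :: 'k set| <o |UNIV :: 'k set| \<longleftrightarrow> (\<exists>b. X \<subseteq> {..<b})"
proof
  assume small: "|X| <o |UNIV :: 'k set|"
  show "\<exists>b. X \<subseteq> {..<b}"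
  proof (rule ccontr)
    assume "\<not> ?thesis"
    hence "unbounded X"
      using bounded_iff_not_unbounded by blast
    thus False
      using small unbounded_imp_ordLeq not_ordLess_ordLeq by blast
  qed
next
  assume "\<exists>b. X \<subseteq> {..<b}"
  then obtain b where "X \<subseteq> {..<b}" ..
  moreover have "|{..<b}| <o |UNIV :: 'k set|"
    using regular unfolding kappa_infinite_regular_cardinal_def by blast
  ultimately show "|X| <o |UNIV :: 'k set|"
    using card_of_mono1 ordLeq_ordLess_trans by blast
qed

lemma unbounded_iff_ordIso: "unbounded (X :: 'k set) \<longleftrightarrow> |X| =o |UNIV :: 'k set|"
proof
  assume "unbounded X"
  hence "|UNIV :: 'k set| \<le>o |X|"
    by (rule unbounded_imp_ordLeq)
  moreover have "|X| \<le>o |UNIV :: 'k set|"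
    by (simp add: card_of_mono1)
  ultimately show "|X| =o |UNIV :: 'k set|"
    by (simp add: ordIso_iff_ordLeq)
next
  assume iso: "|X| =o |UNIV :: 'k set|"
  show "unbounded X"
  proof (rule ccontr)
    assume "\<not> unbounded X"
    then obtain b where "X \<subseteq> {..<b}"
      using bounded_iff_not_unbounded by blast
    thus False
      using iso small_iff_bounded not_ordLess_ordIso by blast
  qed
qed

lemma unbounded_gt:
  assumes "unbounded X"
  shows "\<exists>x\<in>X. (a::'k) < x"
proof -
  obtain b where "a < b"
    using gt_ex_kappa by blast
  moreover obtain x where "x \<in> X" "b \<le> x"
    using assms by blast
  ultimately show ?thesis
    using less_le_trans by blast
qed

lemma small_embedding:
  assumes "|A| <o |UNIV :: 'k set|"
  shows "\<exists>(f :: _ \<Rightarrow> 'k) b. inj_on f A \<and> f ` A \<subseteq> {..<b}"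
proof -
  have "|A| \<le>o |UNIV :: 'k set|"
    using assms by (rule ordLess_imp_ordLeq)
  then obtain f :: "_ \<Rightarrow> 'k" where "inj_on f A"
    unfolding card_of_ordLeq[symmetric] by blast
  moreover have "|f ` A| <o |UNIV :: 'k set|"
    using card_of_image assms by (rule ordLeq_ordLess_trans)
  ultimately show ?thesis
    using small_iff_bounded by blast
qed

lemma small_lessThan_square: "|{..<a::'k} \<times> {..<a}| <o |UNIV :: 'k set|"
proof (cases "finite {..<a}")
  case True
  hence "finite ({..<a} \<times> {..<a})"
    by blast
  thus ?thesis
    using infinite_kappa finite_ordLess_infinite[OF card_of_Well_order card_of_Well_order]
    by (simp add: Field_card_of)
next
  case False
  hence "|{..<a} \<times> {..<a}| =o |{..<a}|"
    by (rule card_of_Times_same_infinite)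
  moreover have "|{..<a}| <o |UNIV :: 'k set|"
    unfolding small_iff_bounded by blast
  ultimately show ?thesis
    by (rule ordIso_ordLess_trans)
qed

lemma small_UN:
  fixes I :: "'a set" and A :: "'a \<Rightarrow> 'b set"
  assumes I: "|I| <o |UNIV :: 'k set|" and A: "\<forall>i\<in>I. |A i| <o |UNIV :: 'k set|"
  shows "|\<Union>i\<in>I. A i| <o |UNIV :: 'k set|"
proof -
  obtain e :: "'a \<Rightarrow> 'k" and b where e: "inj_on e I" "e ` I \<subseteq> {..<b}"
    using small_embedding[OF I] by blast
  have "\<forall>i\<in>I. \<exists>(h :: 'b \<Rightarrow> 'k) g. inj_on h (A i) \<and> h ` A i \<subseteq> {..<g}"
    using A small_embedding by blast
  then obtain h :: "'a \<Rightarrow> 'b \<Rightarrow> 'k" and g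
    where h: "\<forall>i\<in>I. inj_on (h i) (A i) \<and> h i ` A i \<subseteq> {..<g i}"
    by (metis (no_types))
  have "|g ` I| <o |UNIV :: 'k set|"
    using card_of_image I by (rule ordLeq_ordLess_trans)
  then obtain m where m: "g ` I \<subseteq> {..<m}"
    unfolding small_iff_bounded by blast
  define n where "n = max b m"
  have "inj_on (\<lambda>(i, x). (e i, h i x)) (SIGMA i:I. A i)"
    using e(1) h by (auto simp: inj_on_def)
  moreover have "(\<lambda>(i, x). (e i, h i x)) ` (SIGMA i:I. A i) \<subseteq> {..<n} \<times> {..<n}"
    using e(2) h m unfolding n_def by (fastforce simp: less_max_iff_disj)
  ultimately have "|SIGMA i:I. A i| \<le>o |{..<n} \<times> {..<n}|"
    unfolding card_of_ordLeq[symmetric] by blast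
  hence "|SIGMA i:I. A i| <o |UNIV :: 'k set|"
    using small_lessThan_square by (rule ordLeq_ordLess_trans)
  with card_of_UNION_Sigma show ?thesis
    by (rule ordLeq_ordLess_trans)
qed

lemma small_Times:
  assumes "|A| <o |UNIV :: 'k set|" and "|B| <o |UNIV :: 'k set|"
  shows "|A \<times> B| <o |UNIV :: 'k set|"
proof -
  have "A \<times> B = (\<Union>a\<in>A. Pair a ` B)"
    by blast
  moreover have "\<forall>a\<in>A. |Pair a ` B| <o |UNIV :: 'k set|"
    using card_of_image assms(2) by (blast intro: ordLeq_ordLess_trans)
  ultimately show ?thesis
    using small_UN[OF assms(1)] by metis
qed

lemma pigeonhole_unbounded:
  fixes X :: "'k set"
  assumes X: "unbounded X" and g: "g ` X \<subseteq> A" and A: "|A| <o |UNIV :: 'k set|"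
  shows "\<exists>a\<in>A. unbounded {x\<in>X. g x = a}"
proof (rule ccontr)
  assume "\<not> ?thesis"
  hence "\<forall>a\<in>A. |{x\<in>X. g x = a}| <o |UNIV :: 'k set|"
    unfolding small_iff_bounded bounded_iff_not_unbounded by blast
  hence "|\<Union>a\<in>A. {x\<in>X. g x = a}| <o |UNIV :: 'k set|"
    by (rule small_UN[OF A])
  moreover have "X = (\<Union>a\<in>A. {x\<in>X. g x = a})"
    using g by blast
  ultimately have "|X| <o |UNIV :: 'k set|"
    by simp
  thus False
    using X unfolding unbounded_iff_ordIso by (simp add: not_ordLess_ordIso)
qed

section \<open>Weak compactness and trees\<close>

lemma weakly_compact_homogeneous:
  fixes f :: "'k \<Rightarrow> 'k \<Rightarrow> bool"
  assumes "weakly_compact TYPE('k)"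
  obtains H :: "'k set" and b where "unbounded H"
    and "\<forall>\<beta>\<in>H. \<forall>\<gamma>\<in>H. \<beta> < \<gamma> \<longrightarrow> f \<beta> \<gamma> = b"
proof -
  obtain H :: "'k set" and b where "|H| =o |UNIV :: 'k set|"
    and "\<forall>\<beta>\<in>H. \<forall>\<gamma>\<in>H. \<beta> < \<gamma> \<longrightarrow> f \<beta> \<gamma> = b"
    using assms unfolding weakly_compact_def by (elim conjE allE[of _ f] exE) blast
  moreover from this(1) have "unbounded H"
    by (simp add: unbounded_iff_ordIso)
  ultimately show thesis
    using that by blast
qed

text \<open>A lexicographically homogeneous set cannot extend two different nodes unboundedly often:
  interleaving the extensions yields pairs compared in both directions.\<close>
lemma lex_homogeneous_no_split:
  fixes t :: "'k \<Rightarrow> 'k \<Rightarrow> 'k"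
  assumes hom: "\<forall>\<beta>\<in>H. \<forall>\<beta>'\<in>H. \<beta> < \<beta>' \<longrightarrow>
      lex_less (restrict (t \<beta>) {..<\<beta>}) (restrict (t \<beta>') {..<\<beta>'}) = b"
    and s: "unbounded {\<beta>\<in>H. \<delta> \<le> \<beta> \<and> restrict (t \<beta>) {..<\<delta>} = s}"
    and s': "unbounded {\<beta>\<in>H. \<delta> \<le> \<beta> \<and> restrict (t \<beta>) {..<\<delta>} = s'}"
    and "\<xi> < \<delta>" and agree: "\<forall>\<eta><\<xi>. s \<eta> = s' \<eta>" and less: "s \<xi> < s' \<xi>"
  shows False
proof -
  define node where "node \<beta> = restrict (t \<beta>) {..<\<beta>}" for \<beta>
  obtain \<beta>1 where \<beta>1: "\<beta>1 \<in> H" "\<delta> \<le> \<beta>1" "s = restrict (t \<beta>1) {..<\<delta>}"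
    using s by force
  obtain \<beta>2 where \<beta>2: "\<beta>2 \<in> H" "\<delta> \<le> \<beta>2" "s' = restrict (t \<beta>2) {..<\<delta>}" "\<beta>1 < \<beta>2"
    using unbounded_gt[OF s'] by force
  obtain \<beta>3 where \<beta>3: "\<beta>3 \<in> H" "\<delta> \<le> \<beta>3" "s = restrict (t \<beta>3) {..<\<delta>}" "\<beta>2 < \<beta>3"
    using unbounded_gt[OF s] by force
  have node: "node \<beta> \<eta> = restrict (t \<beta>) {..<\<delta>} \<eta>" if "\<eta> < \<delta>" "\<delta> \<le> \<beta>" for \<beta> \<eta>
    using that unfolding node_def by (simp add: less_le_trans)
  have node1: "node \<beta>1 \<eta> = s \<eta>" and node2: "node \<beta>2 \<eta> = s' \<eta>" and node3: "node \<beta>3 \<eta> = s \<eta>"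
    if "\<eta> < \<delta>" for \<eta>
    using node[OF that \<beta>1(2)] node[OF that \<beta>2(2)] node[OF that \<beta>3(2)]
    unfolding \<beta>1(3) \<beta>2(3) \<beta>3(3)[symmetric] by simp_all
  have "\<forall>\<eta><\<xi>. node \<beta>1 \<eta> = node \<beta>2 \<eta> \<and> node \<beta>2 \<eta> = node \<beta>3 \<eta>"
    using \<open>\<xi> < \<delta>\<close> agree node1 node2 node3 by auto
  moreover have "node \<beta>1 \<xi> < node \<beta>2 \<xi>" and "node \<beta>3 \<xi> < node \<beta>2 \<xi>"
    using \<open>\<xi> < \<delta>\<close> less node1 node2 node3 by auto
  ultimately have "lex_less (node \<beta>1) (node \<beta>2)" and "\<not> lex_less (node \<beta>2) (node \<beta>3)"
    using lex_less_iff_at_first_diff[of \<xi>] by (metis less_asym)+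
  moreover have "lex_less (node \<beta>1) (node \<beta>2) = lex_less (node \<beta>2) (node \<beta>3)"
    using hom \<beta>1 \<beta>2 \<beta>3 unfolding node_def by metis
  ultimately show False
    by simp
qed

lemma lex_homogeneous_unique_node:
  fixes t :: "'k \<Rightarrow> 'k \<Rightarrow> 'k"
  assumes hom: "\<forall>\<beta>\<in>H. \<forall>\<beta>'\<in>H. \<beta> < \<beta>' \<longrightarrow>
      lex_less (restrict (t \<beta>) {..<\<beta>}) (restrict (t \<beta>') {..<\<beta>'}) = b"
    and s: "unbounded {\<beta>\<in>H. \<delta> \<le> \<beta> \<and> restrict (t \<beta>) {..<\<delta>} = s}"
    and s': "unbounded {\<beta>\<in>H. \<delta> \<le> \<beta> \<and> restrict (t \<beta>) {..<\<delta>} = s'}"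
  shows "s = s'"
proof (rule ccontr)
  assume "s \<noteq> s'"
  define \<xi> where "\<xi> = first_diff s s'"
  have agree: "\<forall>\<eta><\<xi>. s \<eta> = s' \<eta>" and neq: "s \<xi> \<noteq> s' \<xi>"
    unfolding \<xi>_def using first_diff[OF \<open>s \<noteq> s'\<close>] by blast+
  obtain \<beta> \<beta>' where "s = restrict (t \<beta>) {..<\<delta>}" "s' = restrict (t \<beta>') {..<\<delta>}"
    using s s' by force
  hence "\<xi> < \<delta>"
    using neq by (metis lessThan_iff restrict_apply)
  from neq consider "s \<xi> < s' \<xi>" | "s' \<xi> < s \<xi>"
    by (metis neqE)
  thus False
  proof cases
    case 1
    show False
      by (rule lex_homogeneous_no_split[OF hom s s' \<open>\<xi> < \<delta>\<close> agree 1])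
  next
    case 2
    show False
      by (rule lex_homogeneous_no_split[OF hom s' s \<open>\<xi> < \<delta>\<close> _ 2]) (use agree in simp)
  qed
qed

lemma coherent_nodes_branch:
  fixes S :: "'k \<Rightarrow> 'k \<Rightarrow> 'b"
  assumes coherent: "\<And>\<delta> \<delta>'. \<delta> \<le> \<delta>' \<Longrightarrow> restrict (S \<delta>') {..<\<delta>} = S \<delta>"
  shows "\<exists>F. \<forall>\<delta>. restrict F {..<\<delta>} = S \<delta>"
proof (intro exI allI ext)
  fix \<delta> \<xi> :: 'k
  define \<delta>' where "\<delta>' = (SOME \<delta>'. \<xi> < \<delta>')"
  have "\<xi> < \<delta>'"
    unfolding \<delta>'_def using gt_ex_kappa by (rule someI_ex)
  show "restrict (\<lambda>\<xi>. S (SOME \<delta>'. \<xi> < \<delta>') \<xi>) {..<\<delta>} \<xi> = S \<delta> \<xi>"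
  proof (cases "\<xi> < \<delta>")
    case True
    have "S \<delta>' \<xi> = restrict (S (max \<delta> \<delta>')) {..<\<delta>'} \<xi>"
      using coherent[of \<delta>' "max \<delta> \<delta>'"] by simp
    also have "\<dots> = restrict (S (max \<delta> \<delta>')) {..<\<delta>} \<xi>"
      using True \<open>\<xi> < \<delta>'\<close> by simp
    also have "\<dots> = S \<delta> \<xi>"
      using coherent[of \<delta> "max \<delta> \<delta>'"] by simp
    finally show ?thesis
      using True unfolding \<delta>'_def by simp
  next
    case False
    thus ?thesis
      using coherent[of \<delta> \<delta>] by (metis lessThan_iff order_refl restrict_apply)
  qed
qed

lemma unbounded_extensions_ex:
  fixes t :: "'k \<Rightarrow> 'k \<Rightarrow> 'b"
  assumes H: "unbounded H" and small: "|tree_level t \<delta>| <o |UNIV :: 'k set|"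
  shows "\<exists>s\<in>tree_level t \<delta>. unbounded {\<beta>\<in>H. \<delta> \<le> \<beta> \<and> restrict (t \<beta>) {..<\<delta>} = s}"
proof -
  have X: "unbounded {\<beta>\<in>H. \<delta> \<le> \<beta>}"
    using H by (metis (mono_tags, lifting) max.bounded_iff mem_Collect_eq)
  have "(\<lambda>\<beta>. restrict (t \<beta>) {..<\<delta>}) ` {\<beta>\<in>H. \<delta> \<le> \<beta>} \<subseteq> tree_level t \<delta>"
    unfolding tree_level_def by auto
  from pigeonhole_unbounded[OF X this small] obtain s where s: "s \<in> tree_level t \<delta>"
    and "unbounded {\<beta>\<in>{\<beta>\<in>H. \<delta> \<le> \<beta>}. restrict (t \<beta>) {..<\<delta>} = s}"
    by blast
  moreover have "{\<beta>\<in>{\<beta>\<in>H. \<delta> \<le> \<beta>}. restrict (t \<beta>) {..<\<delta>} = s}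
      = {\<beta>\<in>H. \<delta> \<le> \<beta> \<and> restrict (t \<beta>) {..<\<delta>} = s}"
    by auto
  ultimately have "unbounded {\<beta>\<in>H. \<delta> \<le> \<beta> \<and> restrict (t \<beta>) {..<\<delta>} = s}"
    by simp
  with s show ?thesis
    by blast
qed

lemma weakly_compact_branch_if_levels_small:
  fixes t :: "'k \<Rightarrow> 'k \<Rightarrow> 'k"
  assumes wc: "weakly_compact TYPE('k)"
    and small: "\<And>\<delta>. |tree_level t \<delta>| <o |UNIV :: 'k set|"
  shows "\<exists>F. \<forall>\<delta>. restrict F {..<\<delta>} \<in> tree_level t \<delta>"
proof -
  obtain H b where H: "unbounded H" and hom: "\<forall>\<beta>\<in>H. \<forall>\<beta>'\<in>H. \<beta> < \<beta>' \<longrightarrow>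
      lex_less (restrict (t \<beta>) {..<\<beta>}) (restrict (t \<beta>') {..<\<beta>'}) = b"
    by (rule weakly_compact_homogeneous[OF wc])
  define ext where "ext \<delta> s = {\<beta>\<in>H. \<delta> \<le> \<beta> \<and> restrict (t \<beta>) {..<\<delta>} = s}" for \<delta> s
  have "\<exists>s\<in>tree_level t \<delta>. unbounded (ext \<delta> s)" for \<delta>
    unfolding ext_def by (rule unbounded_extensions_ex[OF H small])
  then obtain S where S: "\<And>\<delta>. S \<delta> \<in> tree_level t \<delta> \<and> unbounded (ext \<delta> (S \<delta>))"
    by metis
  have "restrict (S \<delta>') {..<\<delta>} = S \<delta>" if "\<delta> \<le> \<delta>'" for \<delta> \<delta>'
  proof -
    have restr: "restrict (restrict (t \<beta>) {..<\<delta>'}) {..<\<delta>} = restrict (t \<beta>) {..<\<delta>}" for \<beta>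
      using that by (simp add: Int_absorb1)
    have "ext \<delta>' (S \<delta>') \<subseteq> ext \<delta> (restrict (S \<delta>') {..<\<delta>})"
    proof
      fix \<beta> assume "\<beta> \<in> ext \<delta>' (S \<delta>')"
      hence "\<beta> \<in> H" "\<delta>' \<le> \<beta>" "S \<delta>' = restrict (t \<beta>) {..<\<delta>'}"
        unfolding ext_def by auto
      thus "\<beta> \<in> ext \<delta> (restrict (S \<delta>') {..<\<delta>})"
        using that restr unfolding ext_def by auto
    qed
    hence "unbounded (ext \<delta> (restrict (S \<delta>') {..<\<delta>}))"
      using S by (meson subsetD)
    thus ?thesis
      using lex_homogeneous_unique_node[OF hom] S unfolding ext_def by blast
  qed
  then obtain F where "\<forall>\<delta>. restrict F {..<\<delta>} = S \<delta>"
    using coherent_nodes_branch by blast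
  thus ?thesis
    using S by metis
qed

lemma small_if_lower_restrictions_small:
  fixes N :: "('k \<Rightarrow> 'k) set" and V :: "'k set"
  assumes wc: "weakly_compact TYPE('k)"
    and N: "N \<subseteq> {..<\<alpha>} \<rightarrow>\<^sub>E V" and V: "|V| <o |UNIV :: 'k set|"
    and lower: "\<And>\<delta>. \<delta> < \<alpha> \<Longrightarrow> |(\<lambda>s. restrict s {..<\<delta>}) ` N| <o |UNIV :: 'k set|"
  shows "|N| <o |UNIV :: 'k set|"
proof (rule ccontr)
  assume "\<not> ?thesis"
  hence "|UNIV :: 'k set| \<le>o |N|"
    by (simp add: not_ordLess_iff_ordLeq card_of_Well_order)
  then obtain u :: "'k \<Rightarrow> 'k \<Rightarrow> 'k" where u: "inj u" "range u \<subseteq> N"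
    unfolding card_of_ordLeq[symmetric] by blast
  obtain H b where H: "unbounded H" and hom: "\<forall>\<beta>\<in>H. \<forall>\<gamma>\<in>H. \<beta> < \<gamma> \<longrightarrow> lex_less (u \<beta>) (u \<gamma>) = b"
    by (rule weakly_compact_homogeneous[OF wc])
  define nxt where "nxt \<beta> = (LEAST \<gamma>. \<gamma> \<in> H \<and> \<beta> < \<gamma>)" for \<beta>
  have nxt: "nxt \<beta> \<in> H \<and> \<beta> < nxt \<beta>" for \<beta>
    unfolding nxt_def using unbounded_gt[OF H, of \<beta>] by (metis (mono_tags, lifting) LeastI)
  moreover have "\<gamma> \<in> H \<Longrightarrow> \<beta> < \<gamma> \<Longrightarrow> nxt \<beta> \<le> \<gamma>" for \<beta> \<gamma>
    unfolding nxt_def by (simp add: Least_le)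
  ultimately have "inj_on (\<lambda>\<beta>. divergence (u \<beta>) (u (nxt \<beta>))) H"
    using lex_homogeneous_divergence_inj[OF u(1) hom] by blast
  moreover have "(\<lambda>\<beta>. divergence (u \<beta>) (u (nxt \<beta>))) ` H
      \<subseteq> {..<\<alpha>} \<times> (\<Union>\<delta>\<in>{..<\<alpha>}. (\<lambda>s. restrict s {..<\<delta>}) ` N) \<times> V"
  proof (rule image_subsetI)
    fix \<beta>
    have "u \<beta> \<noteq> u (nxt \<beta>)"
      using u(1) nxt by (metis injD less_irrefl)
    thus "divergence (u \<beta>) (u (nxt \<beta>)) \<in> {..<\<alpha>} \<times> (\<Union>\<delta>\<in>{..<\<alpha>}. (\<lambda>s. restrict s {..<\<delta>}) ` N) \<times> V"
      using divergence_mem[OF N] u(2) by blast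
  qed
  moreover have "|{..<\<alpha>} \<times> (\<Union>\<delta>\<in>{..<\<alpha>}. (\<lambda>s. restrict s {..<\<delta>}) ` N) \<times> V| <o |UNIV :: 'k set|"
  proof -
    have "|{..<\<alpha>}| <o |UNIV :: 'k set|"
      unfolding small_iff_bounded by blast
    moreover from this have "|\<Union>\<delta>\<in>{..<\<alpha>}. (\<lambda>s. restrict s {..<\<delta>}) ` N| <o |UNIV :: 'k set|"
      using lower by (intro small_UN) auto
    ultimately show ?thesis
      using V by (intro small_Times)
  qed
  ultimately have "|H| <o |UNIV :: 'k set|"
    by (meson card_of_ordLeq ordLeq_ordLess_trans)
  thus False
    using H unfolding unbounded_iff_ordIso by (simp add: not_ordLess_ordIso)
qed

lemma weakly_compact_tree_levels_small:
  fixes t :: "'k \<Rightarrow> 'k \<Rightarrow> 'k" and V :: "'k set"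
  assumes wc: "weakly_compact TYPE('k)" and V: "|V| <o |UNIV :: 'k set|"
    and into_V: "\<And>\<beta> \<xi>. \<xi> < \<beta> \<Longrightarrow> t \<beta> \<xi> \<in> V"
  shows "|tree_level t \<alpha>| <o |UNIV :: 'k set|"
proof (induction \<alpha> rule: less_induct)
  case (less \<alpha>)
  show ?case
  proof (rule small_if_lower_restrictions_small[OF wc _ V])
    show "tree_level t \<alpha> \<subseteq> {..<\<alpha>} \<rightarrow>\<^sub>E V"
    proof (unfold tree_level_def, rule image_subsetI)
      fix \<beta> assume "\<beta> \<in> {\<alpha>..}"
      thus "restrict (t \<beta>) {..<\<alpha>} \<in> {..<\<alpha>} \<rightarrow>\<^sub>E V"
        unfolding restrict_PiE_iff using into_V less_le_trans by fastforce
    qed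
  next
    fix \<delta> assume "\<delta> < \<alpha>"
    have "(\<lambda>s. restrict s {..<\<delta>}) ` tree_level t \<alpha> \<subseteq> tree_level t \<delta>"
      unfolding tree_level_def using \<open>\<delta> < \<alpha>\<close> by (auto simp: Int_absorb1)
    thus "|(\<lambda>s. restrict s {..<\<delta>}) ` tree_level t \<alpha>| <o |UNIV :: 'k set|"
      using card_of_mono1 less.IH[OF \<open>\<delta> < \<alpha>\<close>] by (blast intro: ordLeq_ordLess_trans)
  qed
qed

lemma weakly_compact_tree_branch:
  fixes t :: "'k \<Rightarrow> 'k \<Rightarrow> 'k" and V :: "'k set"
  assumes wc: "weakly_compact TYPE('k)" and V: "|V| <o |UNIV :: 'k set|"
    and into_V: "\<And>\<beta> \<xi>. \<xi> < \<beta> \<Longrightarrow> t \<beta> \<xi> \<in> V"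
  shows "\<exists>F. \<forall>\<delta>. restrict F {..<\<delta>} \<in> tree_level t \<delta>"
  using weakly_compact_tree_levels_small[where t = t, OF wc V into_V]
  by (rule weakly_compact_branch_if_levels_small[OF wc])

lemma subadditive_witness_not_weakly_compact:
  fixes c :: "'k \<Rightarrow> 'k \<Rightarrow> 'k"
  assumes limit: "\<And>j. j < \<theta> \<Longrightarrow> \<exists>j'. j < j' \<and> j' < \<theta>"
    and sub: "subadditive c" and U: "witnesses_U c \<theta>"
  shows "\<not> weakly_compact TYPE('k)"
proof
  assume wc: "weakly_compact TYPE('k)"
  have into: "\<And>\<beta> \<xi>. \<xi> < \<beta> \<Longrightarrow> c \<xi> \<beta> \<in> {..<\<theta>}"
    using U unfolding witnesses_U_def coloring_into_def by simp
  have small_theta: "|{..<\<theta>}| <o |UNIV :: 'k set|"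
    unfolding small_iff_bounded by blast
  obtain F where F: "\<And>\<delta>. restrict F {..<\<delta>} \<in> tree_level (\<lambda>\<beta> \<xi>. c \<xi> \<beta>) \<delta>"
    using weakly_compact_tree_branch[OF wc small_theta, of "\<lambda>\<beta> \<xi>. c \<xi> \<beta>"] into by blast
  have F_col: "\<exists>\<beta>. \<xi> < \<beta> \<and> \<xi>' < \<beta> \<and> F \<xi> = c \<xi> \<beta> \<and> F \<xi>' = c \<xi>' \<beta>" if "\<xi> < \<xi>'" for \<xi> \<xi>'
  proof -
    obtain \<delta> where "\<xi>' < \<delta>"
      using gt_ex_kappa by blast
    moreover from this have "\<xi> < \<delta>"
      using \<open>\<xi> < \<xi>'\<close> by simp
    ultimately show ?thesis
      using tree_branch_agrees[OF F] by (metis less_le_trans)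
  qed
  have "F \<xi> \<in> {..<\<theta>}" for \<xi>
  proof -
    obtain \<xi>' where "\<xi> < \<xi>'"
      using gt_ex_kappa by blast
    thus ?thesis
      using F_col into by metis
  qed
  then obtain j where "j \<in> {..<\<theta>}" and X: "unbounded {\<xi>\<in>UNIV. F \<xi> = j}"
    using pigeonhole_unbounded[of UNIV F, OF _ _ small_theta] by blast
  obtain j' where "j < j'" "j' < \<theta>"
    using limit \<open>j \<in> {..<\<theta>}\<close> by blast
  obtain \<xi> \<xi>' where \<xi>: "F \<xi> = j" "F \<xi>' = j" "\<xi> < \<xi>'" "j' \<le> c \<xi> \<xi>'"
    using U \<open>j' < \<theta>\<close> X unfolding witnesses_U_def unbounded_iff_ordIso by blast
  then obtain \<beta> where "\<xi>' < \<beta>" "c \<xi> \<beta> = j" "c \<xi>' \<beta> = j"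
    using F_col by metis
  hence "c \<xi> \<xi>' \<le> j"
    using sub \<open>\<xi> < \<xi>'\<close> unfolding subadditive_def by (metis max.idem)
  thus False
    using \<xi>(4) \<open>j < j'\<close> by simp
qed

end

lemma acc_pt_mono_below:
  assumes "acc_pt D \<gamma>" and "\<gamma> < b" and "D \<inter> {..<b} \<subseteq> E"
  shows "acc_pt E \<gamma>"
  unfolding acc_pt_def
proof (intro conjI allI impI)
  show "\<exists>\<beta>. \<beta> < \<gamma>"
    using assms(1) unfolding acc_pt_def by blast
  fix \<beta> assume "\<beta> < \<gamma>"
  then obtain x where "x \<in> D" "\<beta> < x" "x < \<gamma>"
    using assms(1) unfolding acc_pt_def by blast
  moreover have "x < b"
    using \<open>x < \<gamma>\<close> assms(2) by simp
  ultimately show "\<exists>x\<in>E. \<beta> < x \<and> x < \<gamma>"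
    using assms(3) by blast
qed

lemma Union_coherent_Int_lessThan:
  assumes club: "\<forall>a\<in>A. club_in (E a) a"
    and coherent: "\<forall>a\<in>A. \<forall>a'\<in>A. a < a' \<longrightarrow> E a = E a' \<inter> {..<a}"
    and "a \<in> A"
  shows "(\<Union>a\<in>A. E a) \<inter> {..<a} = E a"
proof
  show "E a \<subseteq> (\<Union>a\<in>A. E a) \<inter> {..<a}"
    using club \<open>a \<in> A\<close> unfolding club_in_def by blast
  show "(\<Union>a\<in>A. E a) \<inter> {..<a} \<subseteq> E a"
  proof
    fix x assume "x \<in> (\<Union>a\<in>A. E a) \<inter> {..<a}"
    then obtain a' where "a' \<in> A" "x \<in> E a'" "x < a"
      by blast
    consider "a' = a" | "a' < a" | "a < a'"
      by (rule linorder_cases)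
    thus "x \<in> E a"
      using coherent \<open>a \<in> A\<close> \<open>a' \<in> A\<close> \<open>x \<in> E a'\<close> \<open>x < a\<close> by cases blast+
  qed
qed

lemma club_Union_coherent:
  assumes unbounded: "\<forall>\<delta>. \<exists>a\<in>A. \<delta> < a"
    and club: "\<forall>a\<in>A. club_in (E a) a"
    and coherent: "\<forall>a\<in>A. \<forall>a'\<in>A. a < a' \<longrightarrow> E a = E a' \<inter> {..<a}"
  shows "club (\<Union>a\<in>A. E a)"
  unfolding club_def
proof (intro conjI allI impI)
  fix \<delta>
  obtain a where "a \<in> A" "\<delta> < a"
    using unbounded by blast
  then obtain \<gamma> where "\<gamma> \<in> E a" "\<delta> \<le> \<gamma>"
    using club unfolding club_in_def by blast
  thus "\<exists>\<gamma>\<in>\<Union>a\<in>A. E a. \<delta> \<le> \<gamma>"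
    using \<open>a \<in> A\<close> by blast
next
  fix \<gamma> assume acc: "acc_pt (\<Union>a\<in>A. E a) \<gamma>"
  obtain a where "a \<in> A" "\<gamma> < a"
    using unbounded by blast
  hence "acc_pt (E a) \<gamma>"
    using acc_pt_mono_below[OF acc] Union_coherent_Int_lessThan[OF club coherent] by blast
  hence "\<gamma> \<in> E a"
    using club \<open>a \<in> A\<close> \<open>\<gamma> < a\<close> unfolding club_in_def by blast
  thus "\<gamma> \<in> (\<Union>a\<in>A. E a)"
    using \<open>a \<in> A\<close> by blast
qed

section \<open>The coloring of a \<open>\<boxminus>\<^sup>-(\<kappa>, \<theta>)\<close>-sequence\<close>

locale boxminus_sequence =
  fixes \<theta> :: "'k::wellorder" and C :: "'k \<Rightarrow> 'k \<Rightarrow> 'k set" and ix :: "'k \<Rightarrow> 'k"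
  assumes regular: "kappa_infinite_regular_cardinal TYPE('k)"
    and infinite_theta: "infinite {..<\<theta>}"
    and boxminus: "boxminus_minus_wit \<theta> C ix"
begin

lemma limit_clauses:
  assumes "\<alpha> \<in> acc UNIV"
  shows ix_less: "ix \<alpha> < \<theta>"
    and club_in_C: "ix \<alpha> \<le> i \<Longrightarrow> i < \<theta> \<Longrightarrow> club_in (C \<alpha> i) \<alpha>"
    and C_mono: "ix \<alpha> \<le> i \<Longrightarrow> i \<le> j \<Longrightarrow> j < \<theta> \<Longrightarrow> C \<alpha> i \<subseteq> C \<alpha> j"
    and C_coherent: "ix \<alpha> \<le> i \<Longrightarrow> i < \<theta> \<Longrightarrow> \<alpha>' \<in> acc (C \<alpha> i) \<Longrightarrow> \<alpha>' \<in> E_ge \<theta> \<Longrightarrow>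
      ix \<alpha>' \<le> i \<and> C \<alpha>' i = C \<alpha> i \<inter> {..<\<alpha>'}"
  using boxminus[unfolded boxminus_minus_wit_def, THEN conjunct1, rule_format, OF assms]
    boxminus[unfolded boxminus_minus_wit_def, THEN conjunct2, THEN conjunct1, rule_format, OF assms]
  by blast+

lemma C_eventually_coherent:
  "\<alpha>' \<in> acc UNIV \<Longrightarrow> \<alpha> \<in> acc UNIV \<Longrightarrow> \<alpha>' < \<alpha> \<Longrightarrow>
    \<exists>j<\<theta>. \<forall>i. j \<le> i \<and> i < \<theta> \<and> ix \<alpha>' \<le> i \<and> ix \<alpha> \<le> i \<longrightarrow> C \<alpha>' i = C \<alpha> i \<inter> {..<\<alpha>'}"
  using boxminus[unfolded boxminus_minus_wit_def, THEN conjunct2, THEN conjunct2, THEN conjunct1]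
  by blast

lemma no_thread:
  "club D \<Longrightarrow> \<exists>\<alpha>\<in>acc D \<inter> E_ge \<theta>. \<forall>i. ix \<alpha> \<le> i \<and> i < \<theta> \<longrightarrow> D \<inter> {..<\<alpha>} \<noteq> C \<alpha> i"
  using boxminus[unfolded boxminus_minus_wit_def, THEN conjunct2, THEN conjunct2, THEN conjunct2]
  by blast

lemma C_subset: "\<alpha> \<in> acc UNIV \<Longrightarrow> ix \<alpha> \<le> i \<Longrightarrow> i < \<theta> \<Longrightarrow> C \<alpha> i \<subseteq> {..<\<alpha>}"
  using club_in_C unfolding club_in_def by blast

text \<open>Clause (4), applied to the club of ordinals above \<open>\<delta>\<close>, yields a limit above \<open>\<delta>\<close>.\<close>
lemma limit_above: "\<exists>\<alpha>\<in>acc UNIV. (\<delta>::'k) \<le> \<alpha>"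
proof -
  have "club {\<delta>..}"
    unfolding club_def acc_pt_def by (auto intro: max.cobounded1 max.cobounded2)
  then obtain \<alpha> where "\<alpha> \<in> acc {\<delta>..}"
    using no_thread by blast
  hence "\<alpha> \<in> acc UNIV" and "\<delta> \<le> \<alpha>"
    unfolding acc_def acc_pt_def by blast+
  thus ?thesis
    by blast
qed

definition next_limit :: "'k \<Rightarrow> 'k" where
  "next_limit \<alpha> = (LEAST a. a \<in> acc UNIV \<and> \<alpha> \<le> a)"

lemma next_limit: "next_limit \<alpha> \<in> acc UNIV" "\<alpha> \<le> next_limit \<alpha>"
  unfolding next_limit_def using limit_above[of \<alpha>] by (metis (mono_tags, lifting) LeastI)+

lemma next_limit_least: "a \<in> acc UNIV \<Longrightarrow> \<alpha> \<le> a \<Longrightarrow> next_limit \<alpha> \<le> a"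
  unfolding next_limit_def by (simp add: Least_le)

lemma next_limit_mono: "\<alpha> \<le> \<beta> \<Longrightarrow> next_limit \<alpha> \<le> next_limit \<beta>"
  using next_limit next_limit_least order.trans by metis

lemma next_limit_id: "\<alpha> \<in> acc UNIV \<Longrightarrow> next_limit \<alpha> = \<alpha>"
  using next_limit next_limit_least by (simp add: order_antisym)

definition coheres_from :: "'k \<Rightarrow> 'k \<Rightarrow> 'k \<Rightarrow> bool" where
  "coheres_from a b i \<longleftrightarrow> i < \<theta> \<and> ix a \<le> i \<and> ix b \<le> i \<and>
     (\<forall>k. i \<le> k \<and> k < \<theta> \<longrightarrow> C a k = C b k \<inter> {..<a})"

lemma ex_coheres_from:
  assumes a: "a \<in> acc UNIV" and b: "b \<in> acc UNIV" and "a \<le> b"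
  shows "\<exists>i. coheres_from a b i"
proof (cases "a = b")
  case True
  have "coheres_from a b (ix a)"
    unfolding coheres_from_def using ix_less[OF a] C_subset[OF a] True by auto
  thus ?thesis ..
next
  case False
  hence "a < b"
    using \<open>a \<le> b\<close> by simp
  then obtain j where "j < \<theta>"
    and j: "\<forall>i. j \<le> i \<and> i < \<theta> \<and> ix a \<le> i \<and> ix b \<le> i \<longrightarrow> C a i = C b i \<inter> {..<a}"
    using C_eventually_coherent[OF a b] by blast
  have "coheres_from a b (max j (max (ix a) (ix b)))"
    unfolding coheres_from_def using j \<open>j < \<theta>\<close> ix_less[OF a] ix_less[OF b]
    by (auto simp: le_max_iff_disj)
  thus ?thesis ..
qed

lemma coheres_from_mono: "coheres_from a b i \<Longrightarrow> i \<le> j \<Longrightarrow> j < \<theta> \<Longrightarrow> coheres_from a b j"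
  unfolding coheres_from_def by auto

lemma coheres_from_trans:
  assumes "a \<le> b" and ab: "coheres_from a b i" and bc: "coheres_from b c j"
  shows "coheres_from a c (max i j)"
proof -
  have "{..<b} \<inter> {..<a} = {..<a}"
    using \<open>a \<le> b\<close> by auto
  moreover have "C a k = C b k \<inter> {..<a}" "C b k = C c k \<inter> {..<b}" if "max i j \<le> k" "k < \<theta>" for k
    using ab bc that unfolding coheres_from_def by auto
  ultimately show ?thesis
    using ab bc unfolding coheres_from_def by (simp add: Int_assoc le_max_iff_disj)
qed

lemma coheres_from_below:
  assumes "a \<le> b" and ac: "coheres_from a c i" and bc: "coheres_from b c j"
  shows "coheres_from a b (max i j)"
proof -
  have "{..<b} \<inter> {..<a} = {..<a}"
    using \<open>a \<le> b\<close> by auto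
  moreover have "C a k = C c k \<inter> {..<a}" "C b k = C c k \<inter> {..<b}" if "max i j \<le> k" "k < \<theta>" for k
    using ac bc that unfolding coheres_from_def by auto
  ultimately show ?thesis
    using ac bc unfolding coheres_from_def by (simp add: Int_assoc le_max_iff_disj)
qed

text \<open>The sequence is indexed by limit ordinals only; other ordinals are moved up to the next limit.\<close>
definition box_coloring :: "'k \<Rightarrow> 'k \<Rightarrow> 'k" where
  "box_coloring \<alpha> \<beta> = (LEAST i. coheres_from (next_limit \<alpha>) (next_limit \<beta>) i)"

lemma coheres_from_box_coloring:
  "\<alpha> \<le> \<beta> \<Longrightarrow> coheres_from (next_limit \<alpha>) (next_limit \<beta>) (box_coloring \<alpha> \<beta>)"
  unfolding box_coloring_def using ex_coheres_from next_limit next_limit_mono by (metis LeastI_ex)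

lemma box_coloring_le: "coheres_from (next_limit \<alpha>) (next_limit \<beta>) i \<Longrightarrow> box_coloring \<alpha> \<beta> \<le> i"
  unfolding box_coloring_def by (rule Least_le)

lemma box_coloring_le_iff:
  assumes "\<alpha> \<le> \<beta>" and "j < \<theta>"
  shows "box_coloring \<alpha> \<beta> \<le> j \<longleftrightarrow> coheres_from (next_limit \<alpha>) (next_limit \<beta>) j"
  using coheres_from_box_coloring[OF assms(1)] coheres_from_mono assms(2) box_coloring_le by blast

lemma coloring_into_box_coloring: "coloring_into box_coloring \<theta>"
  using coheres_from_box_coloring less_imp_le unfolding coloring_into_def coheres_from_def by blast

lemma subadditive_box_coloring: "subadditive box_coloring"
  unfolding subadditive_def
proof (intro allI impI conjI)
  fix \<alpha> \<beta> \<gamma> :: 'k assume "\<alpha> < \<beta> \<and> \<beta> < \<gamma>"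
  hence "\<alpha> \<le> \<beta>" "\<beta> \<le> \<gamma>" "\<alpha> \<le> \<gamma>"
    by auto
  note coh = coheres_from_box_coloring[OF this(1)] coheres_from_box_coloring[OF this(2)]
    coheres_from_box_coloring[OF this(3)]
  have "next_limit \<alpha> \<le> next_limit \<beta>"
    using \<open>\<alpha> \<le> \<beta>\<close> by (rule next_limit_mono)
  note mx = coheres_from_trans[OF this coh(1,2)] coheres_from_below[OF this coh(3,2)]
  show "box_coloring \<alpha> \<gamma> \<le> max (box_coloring \<alpha> \<beta>) (box_coloring \<beta> \<gamma>)"
    using mx(1) by (rule box_coloring_le)
  show "box_coloring \<alpha> \<beta> \<le> max (box_coloring \<alpha> \<gamma>) (box_coloring \<beta> \<gamma>)"
    using mx(2) by (rule box_coloring_le)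
qed

lemma coheres_from_cofinal:
  assumes a: "a \<in> acc UNIV" and "coheres_from a b j" and "\<delta> < a"
  shows "\<exists>\<gamma>\<in>C b j. \<delta> < \<gamma> \<and> \<gamma> < a"
proof -
  obtain \<delta>' where "\<delta> < \<delta>'" "\<delta>' < a"
    using a \<open>\<delta> < a\<close> unfolding acc_def acc_pt_def by blast
  moreover have "ix a \<le> j" "j < \<theta>" and C_a: "C a j = C b j \<inter> {..<a}"
    using \<open>coheres_from a b j\<close> unfolding coheres_from_def by auto
  ultimately obtain \<gamma> where "\<gamma> \<in> C a j" "\<delta>' \<le> \<gamma>"
    using club_in_C[OF a] unfolding club_in_def by blast
  thus ?thesis
    using C_a \<open>\<delta> < \<delta>'\<close> by (auto intro: less_le_trans)
qed

lemma coheres_from_accumulation: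
  assumes "\<alpha> \<in> E_ge \<theta>" and "\<alpha> < b" and b: "b \<in> acc UNIV" and "ix b \<le> j" and "j < \<theta>"
    and acc: "acc_pt (C b j) \<alpha>"
  shows "coheres_from \<alpha> b j"
proof -
  have "\<alpha> \<in> C b j"
    using club_in_C[OF b \<open>ix b \<le> j\<close> \<open>j < \<theta>\<close>] acc \<open>\<alpha> < b\<close> unfolding club_in_def by blast
  have "ix \<alpha> \<le> k \<and> C \<alpha> k = C b k \<inter> {..<\<alpha>}" if "j \<le> k" "k < \<theta>" for k
  proof -
    have "C b j \<subseteq> C b k"
      using C_mono[OF b \<open>ix b \<le> j\<close> that] .
    hence "\<alpha> \<in> acc (C b k)"
      using acc_pt_mono_below[OF acc \<open>\<alpha> < b\<close>] \<open>\<alpha> \<in> C b j\<close> unfolding acc_def by blast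
    thus ?thesis
      using C_coherent[OF b _ \<open>k < \<theta>\<close> _ \<open>\<alpha> \<in> E_ge \<theta>\<close>] \<open>ix b \<le> j\<close> \<open>j \<le> k\<close> by auto
  qed
  thus ?thesis
    unfolding coheres_from_def using \<open>ix b \<le> j\<close> \<open>j < \<theta>\<close> by auto
qed

lemma acc_pt_if_cofinally_coherent:
  assumes "\<exists>\<delta>. \<delta> < \<alpha>"
    and cofinal: "\<forall>\<delta><\<alpha>. \<exists>a\<in>acc UNIV. \<delta> < a \<and> a < \<alpha> \<and> coheres_from a b j"
  shows "acc_pt (C b j) \<alpha>"
  unfolding acc_pt_def
proof (intro conjI allI impI)
  show "\<exists>\<delta>. \<delta> < \<alpha>"
    by fact
  fix \<delta> assume "\<delta> < \<alpha>"
  then obtain a where "a \<in> acc UNIV" "\<delta> < a" "a < \<alpha>" "coheres_from a b j"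
    using cofinal by blast
  then obtain \<gamma> where "\<gamma> \<in> C b j" "\<delta> < \<gamma>" "\<gamma> < a"
    using coheres_from_cofinal by blast
  thus "\<exists>\<gamma>\<in>C b j. \<delta> < \<gamma> \<and> \<gamma> < \<alpha>"
    using less_trans[OF _ \<open>a < \<alpha>\<close>] by blast
qed

lemma Sigma_closed_box_coloring: "Sigma_closed (E_ge \<theta>) box_coloring \<theta>"
  unfolding Sigma_closed_def
proof (intro allI impI, elim conjE)
  fix \<alpha> \<beta> j assume "\<alpha> < \<beta>" "j < \<theta>" "\<alpha> \<in> E_ge \<theta>" "\<exists>\<delta>. \<delta> < \<alpha>"
    and cofinal: "\<forall>\<delta><\<alpha>. \<exists>\<epsilon><\<alpha>. \<delta> < \<epsilon> \<and> box_coloring \<epsilon> \<beta> \<le> j"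
  have "\<alpha> \<in> acc UNIV"
    using cf_ge_imp_limit[OF _ infinite_theta] \<open>\<alpha> \<in> E_ge \<theta>\<close> \<open>\<exists>\<delta>. \<delta> < \<alpha>\<close>
    unfolding E_ge_def acc_def acc_pt_def by blast
  hence lim_\<alpha>: "next_limit \<alpha> = \<alpha>"
    by (rule next_limit_id)
  define b where "b = next_limit \<beta>"
  have b: "b \<in> acc UNIV" "\<alpha> < b"
    unfolding b_def using next_limit[of \<beta>] \<open>\<alpha> < \<beta>\<close> by auto
  have coh: "coheres_from (next_limit \<epsilon>) b j \<and> next_limit \<epsilon> \<le> \<alpha>"
    if "\<epsilon> < \<alpha>" "box_coloring \<epsilon> \<beta> \<le> j" for \<epsilon>
    using that box_coloring_le_iff[of \<epsilon> \<beta> j] \<open>j < \<theta>\<close> \<open>\<alpha> < \<beta>\<close> next_limit_least[OF \<open>\<alpha> \<in> acc UNIV\<close>]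
    unfolding b_def by auto
  have "coheres_from \<alpha> b j"
  proof (cases "\<exists>\<epsilon><\<alpha>. box_coloring \<epsilon> \<beta> \<le> j \<and> next_limit \<epsilon> = \<alpha>")
    case True
    thus ?thesis
      using coh by auto
  next
    case False
    have "\<forall>\<delta><\<alpha>. \<exists>a\<in>acc UNIV. \<delta> < a \<and> a < \<alpha> \<and> coheres_from a b j"
    proof (intro allI impI)
      fix \<delta> assume "\<delta> < \<alpha>"
      then obtain \<epsilon> where "\<epsilon> < \<alpha>" "\<delta> < \<epsilon>" "box_coloring \<epsilon> \<beta> \<le> j"
        using cofinal by blast
      moreover from this have "next_limit \<epsilon> < \<alpha>" "coheres_from (next_limit \<epsilon>) b j"
        using coh False le_neq_trans by blast+
      moreover have "\<delta> < next_limit \<epsilon>"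
        using \<open>\<delta> < \<epsilon>\<close> next_limit(2) by (rule less_le_trans)
      ultimately show "\<exists>a\<in>acc UNIV. \<delta> < a \<and> a < \<alpha> \<and> coheres_from a b j"
        using next_limit(1) by blast
    qed
    hence "acc_pt (C b j) \<alpha>"
      by (rule acc_pt_if_cofinally_coherent[OF \<open>\<exists>\<delta>. \<delta> < \<alpha>\<close>])
    moreover have "ix b \<le> j"
      using coh \<open>j < \<theta>\<close> cofinal \<open>\<exists>\<delta>. \<delta> < \<alpha>\<close> unfolding coheres_from_def by blast
    ultimately show ?thesis
      using coheres_from_accumulation \<open>\<alpha> \<in> E_ge \<theta>\<close> b \<open>j < \<theta>\<close> by blast
  qed
  thus "box_coloring \<alpha> \<beta> \<le> j"
    using box_coloring_le lim_\<alpha> unfolding b_def by metis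
qed

lemma no_unbounded_coherent_family:
  assumes unbounded: "\<forall>\<delta>. \<exists>a\<in>A. \<delta> < a" and "j < \<theta>"
    and lim: "\<forall>a\<in>A. a \<in> acc UNIV \<and> ix a \<le> j"
    and coherent: "\<forall>a\<in>A. \<forall>a'\<in>A. a < a' \<longrightarrow> C a j = C a' j \<inter> {..<a}"
  shows False
proof -
  define D where "D = (\<Union>a\<in>A. C a j)"
  have club: "\<forall>a\<in>A. club_in (C a j) a"
    using lim club_in_C \<open>j < \<theta>\<close> by blast
  obtain \<alpha> where "\<alpha> \<in> acc D" "\<alpha> \<in> E_ge \<theta>"
    and no_eq: "\<forall>i. ix \<alpha> \<le> i \<and> i < \<theta> \<longrightarrow> D \<inter> {..<\<alpha>} \<noteq> C \<alpha> i"
    using no_thread club_Union_coherent[OF unbounded club coherent] unfolding D_def by blast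
  obtain a where "a \<in> A" "\<alpha> < a"
    using unbounded by blast
  have D_a: "D \<inter> {..<a} = C a j"
    unfolding D_def using Union_coherent_Int_lessThan[OF club coherent \<open>a \<in> A\<close>] .
  have "\<alpha> \<in> C a j"
    using \<open>\<alpha> \<in> acc D\<close> \<open>\<alpha> < a\<close> D_a unfolding acc_def by blast
  moreover have "acc_pt (C a j) \<alpha>"
    using \<open>\<alpha> \<in> acc D\<close> \<open>\<alpha> < a\<close> D_a unfolding acc_def by (blast intro: acc_pt_mono_below)
  ultimately have "\<alpha> \<in> acc (C a j)"
    unfolding acc_def by blast
  moreover have "a \<in> acc UNIV" "ix a \<le> j"
    using lim \<open>a \<in> A\<close> by auto
  ultimately have "ix \<alpha> \<le> j \<and> C \<alpha> j = C a j \<inter> {..<\<alpha>}"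
    using C_coherent \<open>j < \<theta>\<close> \<open>\<alpha> \<in> E_ge \<theta>\<close> by blast
  moreover have "C a j \<inter> {..<\<alpha>} = D \<inter> {..<\<alpha>}"
    using D_a \<open>\<alpha> < a\<close> by (auto simp flip: D_a)
  ultimately show False
    using no_eq \<open>j < \<theta>\<close> by auto
qed

lemma box_coloring_witnesses_U: "witnesses_U box_coloring \<theta>"
  unfolding witnesses_U_def
proof (intro conjI allI impI coloring_into_box_coloring)
  fix H :: "'k set" and j assume "|H| =o |UNIV :: 'k set|" and "j < \<theta>"
  hence H: "unbounded H"
    using unbounded_iff_ordIso[OF regular] by blast
  show "\<exists>\<alpha>\<in>H. \<exists>\<beta>\<in>H. \<alpha> < \<beta> \<and> j \<le> box_coloring \<alpha> \<beta>"
  proof (rule ccontr)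
    assume "\<not> ?thesis"
    hence coh: "coheres_from (next_limit \<alpha>) (next_limit \<beta>) j" if "\<alpha> \<in> H" "\<beta> \<in> H" "\<alpha> < \<beta>" for \<alpha> \<beta>
      using that box_coloring_le_iff \<open>j < \<theta>\<close> by (meson less_imp_le not_le)
    show False
    proof (rule no_unbounded_coherent_family[OF _ \<open>j < \<theta>\<close>, of "next_limit ` H"])
      show "\<forall>\<delta>. \<exists>a\<in>next_limit ` H. \<delta> < a"
        using unbounded_gt[OF regular H] next_limit(2) by (meson imageI less_le_trans)
      show "\<forall>a\<in>next_limit ` H. a \<in> acc UNIV \<and> ix a \<le> j"
        using coh unbounded_gt[OF regular H] next_limit(1) unfolding coheres_from_def by blast
      show "\<forall>a\<in>next_limit ` H. \<forall>a'\<in>next_limit ` H. a < a' \<longrightarrow> C a j = C a' j \<inter> {..<a}"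
      proof (intro ballI impI)
        fix a a' assume "a \<in> next_limit ` H" "a' \<in> next_limit ` H" "a < a'"
        then obtain \<alpha> \<beta> where "\<alpha> \<in> H" "\<beta> \<in> H" "a = next_limit \<alpha>" "a' = next_limit \<beta>"
          by blast
        moreover from this have "\<alpha> < \<beta>"
          using \<open>a < a'\<close> next_limit_mono by (metis leD le_less_linear)
        ultimately show "C a j = C a' j \<inter> {..<a}"
          using coh \<open>j < \<theta>\<close> unfolding coheres_from_def by blast
      qed
    qed
  qed
qed

end

theorem proposition3p8:
  fixes \<theta> :: "'k::wellorder"
  assumes "kappa_infinite_regular_cardinal TYPE('k)"
    and "infinite_regular_cardinal_ord \<theta>"
    and "boxminus_minus TYPE('k) \<theta>"
  shows "(\<exists>c :: 'k \<Rightarrow> 'k \<Rightarrow> 'k. Sigma_closed (E_ge \<theta>) c \<theta> \<and> subadditive c \<and> witnesses_U c \<theta>)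
         \<and> \<not> weakly_compact TYPE('k)"
proof -
  have "infinite {..<\<theta>}" and "cf_ge \<theta> \<theta>"
    using assms(2) unfolding infinite_regular_cardinal_ord_def by blast+
  hence theta_limit: "\<And>j. j < \<theta> \<Longrightarrow> \<exists>j'. j < j' \<and> j' < \<theta>"
    using cf_ge_imp_limit by blast
  obtain C ix where "boxminus_minus_wit \<theta> C ix"
    using assms(3) unfolding boxminus_minus_def by blast
  then interpret boxminus_sequence \<theta> C ix
    using assms(1) \<open>infinite {..<\<theta>}\<close> by unfold_locales
  have "\<not> weakly_compact TYPE('k)"
    using subadditive_witness_not_weakly_compact[OF assms(1) theta_limit]
      subadditive_box_coloring box_coloring_witnesses_U by blast
  thus ?thesis
    using Sigma_closed_box_coloring subadditive_box_coloring box_coloring_witnesses_U by blast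
qed

end
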